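(* Let $G$ be a non-cyclic group such that for any $x,y\in G$ with $\langle x,y\rangle=G$ there exists $z\in G$ with $\langle z,x\rangle\neq G$, $\langle z,y\rangle\neq G$ and $\langle z^{-1}x,z^{-1}y\rangle\neq G$. Then $|\mathcal{C}(G)|$ is simply connected.
   Context: For a group $G$, the coset poset $\mathcal{C}(G)$ is the set of all left cosets $xH$ of all proper subgroups $H<G$ (including the trivial subgroup), ordered by inclusion; $|\mathcal{C}(G)|$ is the geometric realization of its order complex (simplices = finite nonempty chains). *)

theory Defs
  imports "HOL-Analysis.Analysis" "HOL-Algebra.Algebra"
begin

definition coset_poset :: "('a, 'b) monoid_scheme \<Rightarrow> 'a set set" where
  "coset_poset G = {l_coset G x H | x H. x \<in> carrier G \<and> subgroup H G \<and> H \<noteq> carrier G}"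

definition order_complex :: "'v set set \<Rightarrow> 'v set set set" where
  "order_complex P = {S. S \<noteq> {} \<and> finite S \<and> S \<subseteq> P \<and> (\<forall>x\<in>S. \<forall>y\<in>S. x \<subseteq> y \<or> y \<subseteq> x)}"

text \<open>Closed geometric simplex spanned by a finite vertex set, as barycentric coordinate functions.\<close>
definition simplex_pts :: "'v set \<Rightarrow> ('v \<Rightarrow> real) set" where
  "simplex_pts \<sigma> = {f. (\<forall>v. 0 \<le> f v) \<and> (\<forall>v. v \<notin> \<sigma> \<longrightarrow> f v = 0) \<and> sum f \<sigma> = 1}"

definition realization_set :: "'v set set \<Rightarrow> ('v \<Rightarrow> real) set" where
  "realization_set K = (\<Union>\<sigma>\<in>K. simplex_pts \<sigma>)"

definition geom_realization :: "'v set set \<Rightarrow> ('v \<Rightarrow> real) topology" where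
  "geom_realization K = topology (\<lambda>U. U \<subseteq> realization_set K \<and>
     (\<forall>\<sigma>\<in>K. openin (subtopology euclidean (simplex_pts \<sigma>)) (U \<inter> simplex_pts \<sigma>)))"

text \<open>Simple connectedness for an abstract topological space, transcribed from the
  library's notion for sets: any two loops are homotopic as loops.\<close>
definition simply_connected_space :: "'a topology \<Rightarrow> bool" where
  "simply_connected_space TT \<longleftrightarrow>
     (\<forall>pp qq. pathin TT pp \<and> pp (1::real) = pp 0 \<and> pathin TT qq \<and> qq (1::real) = qq 0 \<longrightarrow>
        homotopic_with (\<lambda>rr. rr (1::real) = rr 0) (subtopology euclideanreal {0..1}) TT pp qq)"

end

(*
  A loop in the weak topology has compact image, so it lies in the realization of a finite
  subposet, where the weak topology agrees with the product topology.  Such a loop is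
  null-homotopic as soon as every vertex v is joined to a base vertex by a path c v, coherently
  in the sense that for u \<subseteq> v the path c u followed by the edge from u to v is homotopic to
  c v: subdivide the loop into pieces that stay in open stars of vertices, and slide each piece
  back along the paths c.

  For the coset poset the base vertex is {1}, and c v runs from {1} to {g}, for some g \<in> v,
  through the smallest coset containing 1 and g, and then up to v.  Coherence comes down to the
  null-homotopy of the edge triangle through {1}, {g}, {h} for group elements g, h.  If <g, h>
  is proper the triangle lies in the star of that subgroup.  Otherwise the hypothesis provides z
  splitting it into three triangles, lying in the proper cosets <z, g>, z <z^-1 g, z^-1 h> and
  <z, h>.
*)
theory Submission
  imports Defs
begin

section \<open>The weak topology of a geometric realization\<close>

lemma istopology_geom_realization:
  "istopology (\<lambda>U. U \<subseteq> realization_set K \<and>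
     (\<forall>\<sigma>\<in>K. openin (top_of_set (simplex_pts \<sigma>)) (U \<inter> simplex_pts \<sigma>)))"
  unfolding istopology_def
proof (intro conjI allI impI ballI)
  fix S T \<sigma>
  assume S: "S \<subseteq> realization_set K \<and> (\<forall>\<sigma>\<in>K. openin (top_of_set (simplex_pts \<sigma>)) (S \<inter> simplex_pts \<sigma>))"
    and T: "T \<subseteq> realization_set K \<and> (\<forall>\<sigma>\<in>K. openin (top_of_set (simplex_pts \<sigma>)) (T \<inter> simplex_pts \<sigma>))"
    and "\<sigma> \<in> K"
  then have "openin (top_of_set (simplex_pts \<sigma>)) ((S \<inter> simplex_pts \<sigma>) \<inter> (T \<inter> simplex_pts \<sigma>))"
    by (intro openin_Int[of _ "S \<inter> simplex_pts \<sigma>" "T \<inter> simplex_pts \<sigma>"]) auto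
  then show "openin (top_of_set (simplex_pts \<sigma>)) (S \<inter> T \<inter> simplex_pts \<sigma>)"
    by (simp add: Int_ac)
next
  fix \<K> \<sigma>
  assume "\<forall>U\<in>\<K>. U \<subseteq> realization_set K \<and> (\<forall>\<sigma>\<in>K. openin (top_of_set (simplex_pts \<sigma>)) (U \<inter> simplex_pts \<sigma>))"
    and "\<sigma> \<in> K"
  then have "openin (top_of_set (simplex_pts \<sigma>)) (\<Union>U\<in>\<K>. U \<inter> simplex_pts \<sigma>)"
    by (intro openin_Union) auto
  then show "openin (top_of_set (simplex_pts \<sigma>)) (\<Union>\<K> \<inter> simplex_pts \<sigma>)"
    by (simp only: Int_Union2)
next
  fix S T
  assume "S \<subseteq> realization_set K \<and> (\<forall>\<sigma>\<in>K. openin (top_of_set (simplex_pts \<sigma>)) (S \<inter> simplex_pts \<sigma>))"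
  then show "S \<inter> T \<subseteq> realization_set K"
    by blast
next
  fix \<K>
  assume "\<forall>U\<in>\<K>. U \<subseteq> realization_set K \<and> (\<forall>\<sigma>\<in>K. openin (top_of_set (simplex_pts \<sigma>)) (U \<inter> simplex_pts \<sigma>))"
  then show "\<Union>\<K> \<subseteq> realization_set K"
    by blast
qed

lemma openin_geom_realization:
  "openin (geom_realization K) U \<longleftrightarrow> U \<subseteq> realization_set K \<and>
     (\<forall>\<sigma>\<in>K. openin (top_of_set (simplex_pts \<sigma>)) (U \<inter> simplex_pts \<sigma>))"
  unfolding geom_realization_def topology_inverse'[OF istopology_geom_realization] by simp

lemma simplex_pts_subset_realization_set: "\<sigma> \<in> K \<Longrightarrow> simplex_pts \<sigma> \<subseteq> realization_set K"
  unfolding realization_set_def by blast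

lemma topspace_geom_realization [simp]: "topspace (geom_realization K) = realization_set K"
proof -
  have "openin (geom_realization K) (realization_set K)"
    by (auto simp: openin_geom_realization Int_absorb1 simplex_pts_subset_realization_set)
  then show ?thesis
    by (metis openin_geom_realization openin_subset openin_topspace subset_antisym)
qed

lemma continuous_map_geom_realization_id:
  "continuous_map (geom_realization K) (top_of_set (realization_set K)) id"
  unfolding continuous_map_def
proof (intro conjI allI impI)
  fix V assume "openin (top_of_set (realization_set K)) V"
  then obtain Ob where "open Ob" "V = realization_set K \<inter> Ob"
    by (auto simp: openin_open)
  moreover have "openin (top_of_set (simplex_pts \<sigma>)) (realization_set K \<inter> Ob \<inter> simplex_pts \<sigma>)"
    if "\<sigma> \<in> K" for \<sigma>
  proof -
    have "realization_set K \<inter> Ob \<inter> simplex_pts \<sigma> = simplex_pts \<sigma> \<inter> Ob"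
      using simplex_pts_subset_realization_set[OF that] by blast
    then show ?thesis
      using \<open>open Ob\<close> by (simp add: openin_open_Int)
  qed
  ultimately have "openin (geom_realization K) (realization_set K \<inter> Ob)"
    by (simp add: openin_geom_realization)
  moreover have "{x \<in> topspace (geom_realization K). id x \<in> V} = realization_set K \<inter> Ob"
    using \<open>V = _\<close> by auto
  ultimately show "openin (geom_realization K) {x \<in> topspace (geom_realization K). id x \<in> V}"
    by simp
qed (simp add: Pi_iff)

lemma closed_simplex_pts: "closed (simplex_pts \<sigma>)"
proof -
  have "simplex_pts \<sigma> = (\<Inter>v. {f. 0 \<le> f v}) \<inter> (\<Inter>v\<in>-\<sigma>. {f. f v = 0}) \<inter> {f. sum f \<sigma> = 1}"
    unfolding simplex_pts_def by auto
  moreover have "closed {f::'a \<Rightarrow> real. 0 \<le> f v}" for v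
    by (intro closed_Collect_le continuous_intros) simp
  moreover have "closed {f::'a \<Rightarrow> real. f v = 0}" for v
    by (intro closed_Collect_eq continuous_intros) simp
  moreover have "closed {f::'a \<Rightarrow> real. sum f \<sigma> = 1}"
    by (intro closed_Collect_eq continuous_intros continuous_on_sum) simp
  ultimately show ?thesis
    by (metis closed_INT closed_Int)
qed

lemma finite_imp_closed_fun: "finite (A :: ('a \<Rightarrow> real) set) \<Longrightarrow> closed A"
proof -
  have "closed {x :: 'a \<Rightarrow> real}" for x
  proof -
    have "closed {f::'a \<Rightarrow> real. f i = x i}" for i
      by (intro closed_Collect_eq continuous_intros) simp
    moreover have "{x} = (\<Inter>i. {f::'a \<Rightarrow> real. f i = x i})"
      by auto
    ultimately show ?thesis
      by auto
  qed
  then show "finite A \<Longrightarrow> closed A"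
    by (metis UN_singleton closed_UN)
qed

lemma continuous_map_finite_subcomplex_inclusion:
  assumes "finite L" "L \<subseteq> K"
  shows "continuous_map (top_of_set (realization_set L)) (geom_realization K) id"
  unfolding continuous_map_def
proof (intro conjI allI impI)
  show "id \<in> topspace (top_of_set (realization_set L)) \<rightarrow> topspace (geom_realization K)"
    using assms(2) by (auto simp: realization_set_def)
  fix U assume U: "openin (geom_realization K) U"
  have "closed (simplex_pts \<sigma> - U)" if "\<sigma> \<in> L" for \<sigma>
  proof -
    have "openin (top_of_set (simplex_pts \<sigma>)) (U \<inter> simplex_pts \<sigma>)"
      using U that assms(2) by (auto simp: openin_geom_realization)
    then have "closedin (top_of_set (simplex_pts \<sigma>)) (simplex_pts \<sigma> - (U \<inter> simplex_pts \<sigma>))"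
      using closedin_diff[OF closedin_topspace] by fastforce
    moreover have "simplex_pts \<sigma> - (U \<inter> simplex_pts \<sigma>) = simplex_pts \<sigma> - U"
      by blast
    ultimately have "closedin (top_of_set (simplex_pts \<sigma>)) (simplex_pts \<sigma> - U)"
      by simp
    then show ?thesis
      using closedin_closed_trans closed_simplex_pts by blast
  qed
  then have "closed (\<Union>\<sigma>\<in>L. simplex_pts \<sigma> - U)"
    using assms(1) by (intro closed_UN) auto
  then have "openin (top_of_set (realization_set L)) (realization_set L \<inter> - (\<Union>\<sigma>\<in>L. simplex_pts \<sigma> - U))"
    by (intro openin_open_Int open_Compl)
  moreover have "{x \<in> topspace (top_of_set (realization_set L)). id x \<in> U} =
      realization_set L \<inter> - (\<Union>\<sigma>\<in>L. simplex_pts \<sigma> - U)"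
    unfolding realization_set_def by auto
  ultimately show "openin (top_of_set (realization_set L))
      {x \<in> topspace (top_of_set (realization_set L)). id x \<in> U}"
    by simp
qed

lemma closedin_geom_realization_if_finite_in_simplices:
  assumes "A \<subseteq> realization_set K" "\<And>\<sigma>. \<sigma> \<in> K \<Longrightarrow> finite (A \<inter> simplex_pts \<sigma>)"
  shows "closedin (geom_realization K) A"
proof -
  have "openin (top_of_set (simplex_pts \<sigma>)) ((realization_set K - A) \<inter> simplex_pts \<sigma>)"
    if "\<sigma> \<in> K" for \<sigma>
  proof -
    have "openin (top_of_set (simplex_pts \<sigma>)) (simplex_pts \<sigma> \<inter> - (A \<inter> simplex_pts \<sigma>))"
      using finite_imp_closed_fun[OF assms(2)[OF that]] by (intro openin_open_Int open_Compl)
    moreover have "(realization_set K - A) \<inter> simplex_pts \<sigma> = simplex_pts \<sigma> \<inter> - (A \<inter> simplex_pts \<sigma>)"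
      using simplex_pts_subset_realization_set[OF that] by blast
    ultimately show ?thesis
      by simp
  qed
  then show ?thesis
    using assms(1) by (simp add: closedin_def openin_geom_realization)
qed

lemma derived_set_of_eq_empty_if_closedin_subsets:
  assumes "\<And>B. B \<subseteq> S \<Longrightarrow> closedin T B"
  shows "T derived_set_of S = {}"
proof -
  have "x \<notin> T derived_set_of S" for x
  proof
    assume x: "x \<in> T derived_set_of S"
    let ?O = "topspace T - (S - {x})"
    have "openin T ?O"
      using assms[of "S - {x}"] by (simp add: closedin_def)
    moreover have "x \<in> ?O"
      using x by (simp add: in_derived_set_of)
    ultimately obtain y where "y \<noteq> x" "y \<in> S" "y \<in> ?O"
      using x unfolding in_derived_set_of by (elim conjE allE[of _ ?O]) blast
    then show False
      by blast
  qed
  then show ?thesis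
    by blast
qed

lemma closedin_geom_realization_distinct_supports:
  assumes "A \<subseteq> realization_set K" "inj_on (\<lambda>f. {v. f v \<noteq> 0}) A" "\<And>\<sigma>. \<sigma> \<in> K \<Longrightarrow> finite \<sigma>"
  shows "closedin (geom_realization K) A"
proof (rule closedin_geom_realization_if_finite_in_simplices[OF assms(1)])
  fix \<sigma> assume "\<sigma> \<in> K"
  have "(\<lambda>f. {v. f v \<noteq> 0}) ` (A \<inter> simplex_pts \<sigma>) \<subseteq> Pow \<sigma>"
    unfolding simplex_pts_def by auto
  then have "finite ((\<lambda>f. {v. f v \<noteq> 0}) ` (A \<inter> simplex_pts \<sigma>))"
    using assms(3)[OF \<open>\<sigma> \<in> K\<close>] finite_subset by blast
  moreover have "inj_on (\<lambda>f. {v. f v \<noteq> 0}) (A \<inter> simplex_pts \<sigma>)"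
    using assms(2) inj_on_subset by blast
  ultimately show "finite (A \<inter> simplex_pts \<sigma>)"
    using finite_imageD by blast
qed

text \<open>Choosing one point of each support occurring in a compact set gives a set all of whose
  subsets are closed, so it has no accumulation points and is finite.\<close>

lemma compactin_geom_realization_finite_support:
  assumes "compactin (geom_realization K) C" "\<And>\<sigma>. \<sigma> \<in> K \<Longrightarrow> finite \<sigma>"
  shows "finite (\<Union>f\<in>C. {v. f v \<noteq> 0})"
proof -
  define supp :: "('a \<Rightarrow> real) \<Rightarrow> 'a set" where "supp = (\<lambda>f. {v. f v \<noteq> 0})"
  have C: "C \<subseteq> realization_set K"
    using compactin_subset_topspace[OF assms(1)] by simp
  have finite_supp: "finite (supp f)" if f: "f \<in> C" for f
  proof -
    obtain \<sigma> where "\<sigma> \<in> K" "f \<in> simplex_pts \<sigma>"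
      using f C unfolding realization_set_def by blast
    then have "supp f \<subseteq> \<sigma>"
      unfolding simplex_pts_def supp_def by auto
    then show ?thesis
      using assms(2)[OF \<open>\<sigma> \<in> K\<close>] finite_subset by blast
  qed
  define D where "D = inv_into C supp ` supp ` C"
  have supp_inv: "supp (inv_into C supp s) = s" if "s \<in> supp ` C" for s
    using that by (rule f_inv_into_f)
  have D: "D \<subseteq> C" "supp ` D = supp ` C"
    unfolding D_def image_image using supp_inv by (auto intro: inv_into_into)
  have "inj_on supp D"
    unfolding D_def by (rule inj_onI) (metis imageE supp_inv)
  then have "closedin (geom_realization K) B" if "B \<subseteq> D" for B
    using that D(1) C assms(2) inj_on_subset[of supp D B]
    by (intro closedin_geom_realization_distinct_supports) (auto simp: supp_def)
  then have "finite D"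
    using compactin_imp_Bolzano_Weierstrass[OF assms(1), of D] D(1)
      derived_set_of_eq_empty_if_closedin_subsets by blast
  then have "finite (supp ` C)"
    using D(2) finite_imageI by metis
  then have "finite (\<Union>(supp ` C))"
    using finite_supp by blast
  then show ?thesis
    by (simp add: supp_def)
qed

section \<open>Paths in spaces of real-valued functions\<close>

definition fun_linepath :: "('v \<Rightarrow> real) \<Rightarrow> ('v \<Rightarrow> real) \<Rightarrow> real \<Rightarrow> 'v \<Rightarrow> real" where
  "fun_linepath a b = (\<lambda>t v. (1 - t) * a v + t * b v)"

lemma continuous_on_fun_linepath [continuous_intros]:
  assumes "continuous_on S f" "continuous_on S g" "continuous_on S h"
  shows "continuous_on S (\<lambda>x. fun_linepath (g x) (h x) (f x))"
  unfolding fun_linepath_def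
proof (rule continuous_on_coordinatewise_then_product)
  fix v
  have "continuous_on S (\<lambda>x. g x v)" "continuous_on S (\<lambda>x. h x v)"
    using assms(2,3) by (auto intro: continuous_on_product_then_coordinatewise)
  then show "continuous_on S (\<lambda>x. (1 - f x) * g x v + f x * h x v)"
    by (intro continuous_intros assms(1))
qed

lemma path_fun_linepath [simp]: "path (fun_linepath a b)"
proof -
  have "continuous_on {0..1} (\<lambda>t. fun_linepath a b t)"
    by (intro continuous_intros)
  then show ?thesis
    by (simp add: path_def)
qed

lemma fun_linepath_0 [simp]: "fun_linepath a b 0 = a"
  and fun_linepath_1 [simp]: "fun_linepath a b 1 = b"
  by (simp_all add: fun_linepath_def)

lemma pathstart_fun_linepath [simp]: "pathstart (fun_linepath a b) = a"
  and pathfinish_fun_linepath [simp]: "pathfinish (fun_linepath a b) = b"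
  by (simp_all add: pathstart_def pathfinish_def)

lemma pathstart_const [simp]: "pathstart (\<lambda>_. a) = a"
  and pathfinish_const [simp]: "pathfinish (\<lambda>_. a) = a"
  by (simp_all add: pathstart_def pathfinish_def)

lemma reversepath_fun_linepath [simp]: "reversepath (fun_linepath a b) = fun_linepath b a"
  by (auto simp: reversepath_def fun_linepath_def algebra_simps)

text \<open>The groupoid laws for paths are proved in the library only for normed vector spaces,
  but they are images of the corresponding homotopies of paths in \<open>{0..1}\<close>.\<close>

lemma homotopic_paths_compose_path:
  assumes "homotopic_paths {0..1} \<alpha> \<beta>" "path g" "path_image g \<subseteq> S"
  shows "homotopic_paths S (g \<circ> \<alpha>) (g \<circ> \<beta>)"
  using assms by (intro homotopic_paths_continuous_image) (auto simp: path_def path_image_def)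

lemma linepath_0_1: "linepath 0 (1::real) = id"
  by (auto simp: linepath_def)

lemma homotopic_paths_rid_const:
  assumes "path p" "path_image p \<subseteq> S"
  shows "homotopic_paths S (p +++ (\<lambda>_. pathfinish p)) p"
proof -
  have "homotopic_paths {0..1} (linepath 0 1 +++ linepath 1 1) (linepath 0 (1::real))"
    using homotopic_paths_rid[of "linepath 0 (1::real)" "{0..1}"]
    by (simp add: closed_segment_eq_real_ivl)
  from homotopic_paths_compose_path[OF this assms] show ?thesis
    unfolding path_compose_join by (simp add: linepath_0_1 linepath_refl comp_def pathfinish_def)
qed

lemma homotopic_paths_lid_const:
  assumes "path p" "path_image p \<subseteq> S"
  shows "homotopic_paths S ((\<lambda>_. pathstart p) +++ p) p"
proof -
  have "homotopic_paths {0..1} (linepath 0 0 +++ linepath 0 1) (linepath 0 (1::real))"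
    using homotopic_paths_lid[of "linepath 0 (1::real)" "{0..1}"]
    by (simp add: closed_segment_eq_real_ivl)
  from homotopic_paths_compose_path[OF this assms] show ?thesis
    unfolding path_compose_join by (simp add: linepath_0_1 linepath_refl comp_def pathstart_def)
qed

lemma homotopic_paths_rinv_const:
  assumes "path p" "path_image p \<subseteq> S"
  shows "homotopic_paths S (p +++ reversepath p) (\<lambda>_. pathstart p)"
proof -
  have "homotopic_paths {0..1} (linepath 0 1 +++ reversepath (linepath 0 1)) (linepath 0 (0::real))"
    using homotopic_paths_rinv[of "linepath 0 (1::real)" "{0..1}"]
    by (simp add: closed_segment_eq_real_ivl)
  from homotopic_paths_compose_path[OF this assms] show ?thesis
    unfolding path_compose_join path_compose_reversepath
    by (simp add: linepath_0_1 linepath_refl comp_def pathstart_def)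
qed

lemma homotopic_paths_linv_const:
  assumes "path p" "path_image p \<subseteq> S"
  shows "homotopic_paths S (reversepath p +++ p) (\<lambda>_. pathfinish p)"
  using homotopic_paths_rinv_const[of "reversepath p" S] assms by simp

lemma path_compose_subpath:
  assumes "path g" "u \<in> {0..1}" "w \<in> {0..1}"
  shows "path (g \<circ> subpath u w id)" "path_image (g \<circ> subpath u w id) \<subseteq> path_image g"
proof -
  have "path_image (subpath u w id) \<subseteq> {0..1::real}"
    using path_image_subpath_subset[of u w id] assms by (simp add: path_image_def)
  moreover have "path (id :: real \<Rightarrow> real)"
    by (simp add: path_def continuous_on_id)
  then have "path (subpath u w (id :: real \<Rightarrow> real))"
    using assms by simp
  ultimately show "path (g \<circ> subpath u w id)"
    using assms(1) unfolding path_def path_image_def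
    by (intro continuous_on_compose) (auto elim: continuous_on_subset)
  show "path_image (g \<circ> subpath u w id) \<subseteq> path_image g"
    using \<open>path_image (subpath u w id) \<subseteq> {0..1}\<close> by (auto simp: path_image_def)
qed

lemma homotopic_paths_join_compose_subpaths:
  assumes "path g" "path_image g \<subseteq> S" "u \<in> {0..1}" "v \<in> {0..1}" "w \<in> {0..1}" "u \<le> v" "v \<le> w"
  shows "homotopic_paths S ((g \<circ> subpath u v id) +++ (g \<circ> subpath v w id)) (g \<circ> subpath u w id)"
proof -
  have "homotopic_paths {0..1} (subpath u v id +++ subpath v w id) (subpath u w (id :: real \<Rightarrow> real))"
    using assms
    by (intro homotopic_join_subpaths1) (auto simp: path_def path_image_def continuous_on_id)
  from homotopic_paths_compose_path[OF this assms(1,2)] show ?thesis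
    by (simp add: path_compose_join)
qed

lemma homotopic_paths_square_boundary:
  fixes h :: "real \<times> real \<Rightarrow> 'a::topological_space"
  assumes "continuous_on ({0..1} \<times> {0..1}) h" "h ` ({0..1} \<times> {0..1}) \<subseteq> S"
  shows "homotopic_paths S (\<lambda>t. h (0, t))
           ((\<lambda>s. h (s, 0)) +++ (\<lambda>t. h (1, t)) +++ reversepath (\<lambda>s. h (s, 1)))"
proof -
  let ?Q = "{0..1} \<times> {0..1} :: (real \<times> real) set"
  let ?left = "linepath (0, 0) (0, 1) :: real \<Rightarrow> real \<times> real"
  let ?around = "linepath (0, 0) (1, 0) +++ linepath (1, 0) (1, 1) +++ linepath (1, 1) (0, (1::real))"
  have "convex ?Q"
    by (intro convex_Times convex_real_interval)
  then have segment: "closed_segment a b \<subseteq> ?Q" if "a \<in> ?Q" "b \<in> ?Q" for a b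
    using that by (rule closed_segment_subset[rotated 2])
  have corners: "(0, 0) \<in> ?Q" "(0, 1) \<in> ?Q" "(1, 0) \<in> ?Q" "(1, 1) \<in> ?Q"
    by auto
  have left: "path_image ?left \<subseteq> ?Q"
    unfolding path_image_linepath by (rule segment[OF corners(1,2)])
  have "path_image ?around \<subseteq> closed_segment (0, 0) (1, 0) \<union>
      (closed_segment (1, 0) (1, 1) \<union> closed_segment (1, 1) (0, (1::real)))"
    using path_image_join_subset[of "linepath (0, 0) (1, 0)"]
      path_image_join_subset[of "linepath (1, 0) (1, 1)" "linepath (1, 1) (0, (1::real))"]
    unfolding path_image_linepath by blast
  then have around: "path_image ?around \<subseteq> ?Q"
    using segment[OF corners(1,3)] segment[OF corners(3,4)] segment[OF corners(4,2)] by blast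
  have "homotopic_paths ?Q ?left ?around"
  proof (rule homotopic_paths_linear)
    show "path ?left" "path ?around"
      by simp_all
    fix t :: real assume "t \<in> {0..1}"
    then have "?left t \<in> ?Q" "?around t \<in> ?Q"
      using left around by (auto simp: path_image_def)
    then show "closed_segment (?left t) (?around t) \<subseteq> ?Q"
      by (rule segment)
  qed simp_all
  then have "homotopic_paths S (h \<circ> ?left) (h \<circ> ?around)"
    using assms by (intro homotopic_paths_continuous_image) auto
  moreover have "h \<circ> ?left = (\<lambda>t. h (0, t))" "h \<circ> linepath (0, 0) (1, 0) = (\<lambda>s. h (s, 0))"
    "h \<circ> linepath (1, 0) (1, 1) = (\<lambda>t. h (1, t))"
    "h \<circ> linepath (1, 1) (0, 1) = reversepath (\<lambda>s. h (s, 1))"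
    by (simp_all add: fun_eq_iff linepath_def reversepath_def)
  ultimately show ?thesis
    by (simp add: path_compose_join)
qed

lemma homotopic_paths_through_point:
  fixes q :: "real \<Rightarrow> 'v \<Rightarrow> real"
  assumes "path q" "\<And>t s. t \<in> {0..1} \<Longrightarrow> s \<in> {0..1} \<Longrightarrow> fun_linepath (q t) c s \<in> S"
  shows "homotopic_paths S q (fun_linepath (pathstart q) c +++ fun_linepath c (pathfinish q))"
proof -
  define h where "h y = fun_linepath (q (snd y)) c (fst y)" for y :: "real \<times> real"
  have "continuous_on ({0..1} \<times> {0..1}) (\<lambda>y. q (snd y))"
    using assms(1) unfolding path_def by (rule continuous_on_compose2) (auto intro!: continuous_intros)
  moreover have "continuous_on ({0..1} \<times> {0..1}) (\<lambda>y::real \<times> real. fst y)"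
    by (rule continuous_on_fst[OF continuous_on_id])
  ultimately have "continuous_on ({0..1} \<times> {0..1}) h"
    unfolding h_def by (rule continuous_on_fun_linepath[OF _ _ continuous_on_const, rotated])
  moreover have "h ` ({0..1} \<times> {0..1}) \<subseteq> S"
    using assms(2) by (auto simp: h_def)
  ultimately have "homotopic_paths S (\<lambda>t. h (0, t))
      ((\<lambda>s. h (s, 0)) +++ (\<lambda>t. h (1, t)) +++ reversepath (\<lambda>s. h (s, 1)))"
    by (rule homotopic_paths_square_boundary)
  moreover have "(\<lambda>t. h (0, t)) = q" "(\<lambda>s. h (s, 0)) = fun_linepath (pathstart q) c"
    "(\<lambda>t. h (1, t)) = (\<lambda>_. c)" "(\<lambda>s. h (s, 1)) = fun_linepath (pathfinish q) c"
    by (simp_all add: h_def pathstart_def pathfinish_def)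
  ultimately have "homotopic_paths S q
      (fun_linepath (pathstart q) c +++ (\<lambda>_. c) +++ fun_linepath c (pathfinish q))"
    by simp
  also have "homotopic_paths S \<dots> (fun_linepath (pathstart q) c +++ fun_linepath c (pathfinish q))"
  proof (rule homotopic_paths_join)
    have "fun_linepath (q 1) c (1 - s) \<in> S" if "s \<in> {0..1}" for s
      using assms(2) that by simp
    then have "path_image (fun_linepath c (pathfinish q)) \<subseteq> S"
      by (auto simp: path_image_def pathfinish_def fun_linepath_def algebra_simps)
    then show "homotopic_paths S ((\<lambda>_. c) +++ fun_linepath c (pathfinish q))
        (fun_linepath c (pathfinish q))"
      using homotopic_paths_lid_const[of "fun_linepath c (pathfinish q)" S] by simp
    have "path_image (fun_linepath (pathstart q) c) \<subseteq> S"
      using assms(2)[of 0] by (auto simp: path_image_def pathstart_def)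
    then show "homotopic_paths S (fun_linepath (pathstart q) c) (fun_linepath (pathstart q) c)"
      by simp
  qed simp
  finally show ?thesis .
qed

lemma homotopic_loops_const_path:
  assumes "path \<gamma>" "path_image \<gamma> \<subseteq> S"
  shows "homotopic_loops S (\<lambda>_. pathstart \<gamma>) (\<lambda>_. pathfinish \<gamma>)"
  unfolding homotopic_loops
proof (intro exI conjI ballI)
  show "continuous_on ({0..1} \<times> {0..1}) (\<lambda>y. \<gamma> (fst y))"
    using assms(1) unfolding path_def
    by (rule continuous_on_compose2[OF _ continuous_on_fst[OF continuous_on_id]]) auto
  show "(\<lambda>y. \<gamma> (fst y)) \<in> {0..1} \<times> {0..1} \<rightarrow> S"
    using assms(2) by (auto simp: path_image_def)
qed (auto simp: pathstart_def pathfinish_def)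

section \<open>Paths in finite subcomplexes of an order complex\<close>

definition subposet_realization :: "'v set set \<Rightarrow> 'v set set \<Rightarrow> ('v set \<Rightarrow> real) set" where
  "subposet_realization P U = realization_set (order_complex (P \<inter> U))"

text \<open>Paths and homotopies are taken in the product topology, inside the realization of a
  finite subposet, where the product topology agrees with the weak one.\<close>

definition fpath :: "'v set set \<Rightarrow> (real \<Rightarrow> 'v set \<Rightarrow> real) \<Rightarrow> bool" where
  "fpath P p \<longleftrightarrow> path p \<and> (\<exists>U. finite U \<and> path_image p \<subseteq> subposet_realization P U)"

definition fhomotopic :: "'v set set \<Rightarrow> (real \<Rightarrow> 'v set \<Rightarrow> real) \<Rightarrow> (real \<Rightarrow> 'v set \<Rightarrow> real) \<Rightarrow> bool" where
  "fhomotopic P p q \<longleftrightarrow> (\<exists>U. finite U \<and> homotopic_paths (subposet_realization P U) p q)"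

lemma order_complex_mono: "A \<subseteq> B \<Longrightarrow> order_complex A \<subseteq> order_complex B"
  unfolding order_complex_def by auto

lemma subposet_realization_mono: "U \<subseteq> V \<Longrightarrow> subposet_realization P U \<subseteq> subposet_realization P V"
  unfolding subposet_realization_def realization_set_def
  using order_complex_mono[of "P \<inter> U" "P \<inter> V"] by blast

lemma fpathI: "path p \<Longrightarrow> path_image p \<subseteq> subposet_realization P U \<Longrightarrow> finite U \<Longrightarrow> fpath P p"
  unfolding fpath_def by blast

lemma fhomotopicI: "homotopic_paths (subposet_realization P U) p q \<Longrightarrow> finite U \<Longrightarrow> fhomotopic P p q"
  unfolding fhomotopic_def by blast

lemma fpath_imp_path: "fpath P p \<Longrightarrow> path p"
  unfolding fpath_def by blast

lemma fpath_common_subposet: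
  assumes "fpath P p" "fpath P q" "fpath P r"
  obtains U where "finite U" "path_image p \<subseteq> subposet_realization P U"
    "path_image q \<subseteq> subposet_realization P U" "path_image r \<subseteq> subposet_realization P U"
proof -
  obtain U1 U2 U3 where "finite U1" "path_image p \<subseteq> subposet_realization P U1"
    "finite U2" "path_image q \<subseteq> subposet_realization P U2"
    "finite U3" "path_image r \<subseteq> subposet_realization P U3"
    using assms unfolding fpath_def by blast
  moreover have "subposet_realization P U1 \<subseteq> subposet_realization P (U1 \<union> U2 \<union> U3)"
    "subposet_realization P U2 \<subseteq> subposet_realization P (U1 \<union> U2 \<union> U3)"
    "subposet_realization P U3 \<subseteq> subposet_realization P (U1 \<union> U2 \<union> U3)"
    by (intro subposet_realization_mono; blast)+
  ultimately show ?thesis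
    using that[of "U1 \<union> U2 \<union> U3"] by blast
qed

lemma fhomotopic_refl: "fpath P p \<Longrightarrow> fhomotopic P p p"
  unfolding fpath_def fhomotopic_def by auto

lemma fhomotopic_sym: "fhomotopic P p q \<Longrightarrow> fhomotopic P q p"
  unfolding fhomotopic_def using homotopic_paths_sym by blast

lemma fhomotopic_common_subposet:
  assumes "fhomotopic P p p'" "fhomotopic P q q'"
  obtains U where "finite U" "homotopic_paths (subposet_realization P U) p p'"
    "homotopic_paths (subposet_realization P U) q q'"
proof -
  obtain U V where U: "finite U" "homotopic_paths (subposet_realization P U) p p'"
    and V: "finite V" "homotopic_paths (subposet_realization P V) q q'"
    using assms unfolding fhomotopic_def by blast
  have "subposet_realization P U \<subseteq> subposet_realization P (U \<union> V)"
    "subposet_realization P V \<subseteq> subposet_realization P (U \<union> V)"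
    by (simp_all add: subposet_realization_mono)
  with U V show ?thesis
    using that[of "U \<union> V"] homotopic_paths_subset by blast
qed

lemma fhomotopic_trans [trans]: "fhomotopic P p q \<Longrightarrow> fhomotopic P q r \<Longrightarrow> fhomotopic P p r"
  by (erule fhomotopic_common_subposet, assumption) (blast intro: fhomotopicI homotopic_paths_trans)

lemma fhomotopic_join:
  "fhomotopic P p p' \<Longrightarrow> fhomotopic P q q' \<Longrightarrow> pathfinish p = pathstart q \<Longrightarrow>
     fhomotopic P (p +++ q) (p' +++ q')"
  by (erule fhomotopic_common_subposet, assumption) (blast intro: fhomotopicI homotopic_paths_join)

lemma fhomotopic_join_left:
  "fhomotopic P q q' \<Longrightarrow> fpath P p \<Longrightarrow> pathfinish p = pathstart q \<Longrightarrow> fhomotopic P (p +++ q) (p +++ q')"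
  using fhomotopic_join fhomotopic_refl by blast

lemma fhomotopic_join_right:
  "fhomotopic P p p' \<Longrightarrow> fpath P q \<Longrightarrow> pathfinish p = pathstart q \<Longrightarrow> fhomotopic P (p +++ q) (p' +++ q)"
  using fhomotopic_join fhomotopic_refl by blast

lemma fpath_join:
  assumes "fpath P p" "fpath P q" "pathfinish p = pathstart q"
  shows "fpath P (p +++ q)"
proof -
  obtain U where "finite U" "path_image p \<subseteq> subposet_realization P U"
    "path_image q \<subseteq> subposet_realization P U"
    using assms(1,2,2) by (rule fpath_common_subposet)
  then show ?thesis
    using assms path_image_join_subset[of p q]
    by (intro fpathI[of _ P U]) (auto simp: fpath_imp_path)
qed

lemma fpath_reversepath: "fpath P p \<Longrightarrow> fpath P (reversepath p)"
  unfolding fpath_def by simp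

lemma fhomotopic_assoc:
  assumes "fpath P p" "fpath P q" "fpath P r" "pathfinish p = pathstart q" "pathfinish q = pathstart r"
  shows "fhomotopic P (p +++ (q +++ r)) ((p +++ q) +++ r)"
proof -
  obtain U where "finite U" "path_image p \<subseteq> subposet_realization P U"
    "path_image q \<subseteq> subposet_realization P U" "path_image r \<subseteq> subposet_realization P U"
    using assms(1-3) by (rule fpath_common_subposet)
  then show ?thesis
    using assms by (intro fhomotopicI homotopic_paths_assoc) (auto simp: fpath_imp_path)
qed

lemma fhomotopic_rid: "fpath P p \<Longrightarrow> fhomotopic P (p +++ (\<lambda>_. pathfinish p)) p"
  unfolding fpath_def fhomotopic_def using homotopic_paths_rid_const by blast

lemma fhomotopic_lid: "fpath P p \<Longrightarrow> fhomotopic P ((\<lambda>_. pathstart p) +++ p) p"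
  unfolding fpath_def fhomotopic_def using homotopic_paths_lid_const by blast

lemma fhomotopic_rinv: "fpath P p \<Longrightarrow> fhomotopic P (p +++ reversepath p) (\<lambda>_. pathstart p)"
  unfolding fpath_def fhomotopic_def using homotopic_paths_rinv_const by blast

lemma fhomotopic_linv: "fpath P p \<Longrightarrow> fhomotopic P (reversepath p +++ p) (\<lambda>_. pathfinish p)"
  unfolding fpath_def fhomotopic_def using homotopic_paths_linv_const by blast

lemma fhomotopic_cancel_right:
  assumes "fpath P p" "fpath P q" "pathfinish p = pathstart q"
  shows "fhomotopic P ((p +++ q) +++ reversepath q) p"
proof -
  have "fhomotopic P ((p +++ q) +++ reversepath q) (p +++ (q +++ reversepath q))"
    using assms by (intro fhomotopic_sym[OF fhomotopic_assoc] fpath_reversepath) auto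
  also have "fhomotopic P \<dots> (p +++ (\<lambda>_. pathfinish p))"
    using fhomotopic_join_left[OF fhomotopic_rinv[OF assms(2)] assms(1)] assms(3) by simp
  also have "fhomotopic P \<dots> p"
    using assms(1) by (rule fhomotopic_rid)
  finally show ?thesis .
qed

lemma fhomotopic_cancel_middle:
  assumes "fpath P p" "fpath P q" "fpath P s" "pathfinish p = pathstart q" "pathstart s = pathstart q"
  shows "fhomotopic P ((p +++ q) +++ (reversepath q +++ s)) (p +++ s)"
proof -
  have "fhomotopic P ((p +++ q) +++ (reversepath q +++ s)) (((p +++ q) +++ reversepath q) +++ s)"
    using assms by (intro fhomotopic_assoc fpath_join fpath_reversepath) auto
  also have "fhomotopic P \<dots> (p +++ s)"
    using assms by (intro fhomotopic_join_right[OF fhomotopic_cancel_right]) auto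
  finally show ?thesis .
qed

lemma fhomotopic_cancel_left:
  assumes "fpath P r" "fpath P p" "pathfinish r = pathstart p" "fhomotopic P (r +++ p) r"
  shows "fhomotopic P p (\<lambda>_. pathstart p)"
proof -
  have "fhomotopic P p ((\<lambda>_. pathstart p) +++ p)"
    using assms(2) by (rule fhomotopic_sym[OF fhomotopic_lid])
  also have "fhomotopic P \<dots> ((reversepath r +++ r) +++ p)"
    using fhomotopic_join_right[OF fhomotopic_sym[OF fhomotopic_linv[OF assms(1)]] assms(2)] assms(3)
    by simp
  also have "fhomotopic P \<dots> (reversepath r +++ (r +++ p))"
    using assms by (intro fhomotopic_sym[OF fhomotopic_assoc] fpath_reversepath) auto
  also have "fhomotopic P \<dots> (reversepath r +++ r)"
    using assms by (intro fhomotopic_join_left fpath_reversepath) auto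
  also have "fhomotopic P \<dots> (\<lambda>_. pathstart p)"
    using fhomotopic_linv[OF assms(1)] assms(3) by simp
  finally show ?thesis .
qed

definition vertex_point :: "'a \<Rightarrow> 'a \<Rightarrow> real" where
  "vertex_point v = (\<lambda>w. if w = v then 1 else 0)"

definition edge_path :: "'a \<Rightarrow> 'a \<Rightarrow> real \<Rightarrow> 'a \<Rightarrow> real" where
  "edge_path u v = fun_linepath (vertex_point u) (vertex_point v)"

lemma pathstart_edge_path [simp]: "pathstart (edge_path u v) = vertex_point u"
  and pathfinish_edge_path [simp]: "pathfinish (edge_path u v) = vertex_point v"
  and reversepath_edge_path [simp]: "reversepath (edge_path u v) = edge_path v u"
  by (simp_all add: edge_path_def)

lemma fun_linepath_in_simplex_pts:
  assumes "a \<in> simplex_pts \<sigma>" "b \<in> simplex_pts \<sigma>" "s \<in> {0..1}"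
  shows "fun_linepath a b s \<in> simplex_pts \<sigma>"
proof -
  have "sum (fun_linepath a b s) \<sigma> = (1 - s) * sum a \<sigma> + s * sum b \<sigma>"
    by (simp add: fun_linepath_def sum.distrib sum_distrib_left)
  then show ?thesis
    using assms by (auto simp: simplex_pts_def fun_linepath_def)
qed

lemma vertex_point_in_simplex_pts: "finite \<sigma> \<Longrightarrow> v \<in> \<sigma> \<Longrightarrow> vertex_point v \<in> simplex_pts \<sigma>"
  unfolding simplex_pts_def vertex_point_def by (simp add: sum.delta')

lemma simplex_pts_nonzero_mem: "x \<in> simplex_pts \<sigma> \<Longrightarrow> x w \<noteq> 0 \<Longrightarrow> w \<in> \<sigma>"
  unfolding simplex_pts_def by auto

lemma chain_in_order_complex:
  assumes "\<sigma> \<subseteq> P" "finite \<sigma>" "\<sigma> \<noteq> {}" "\<forall>x\<in>\<sigma>. \<forall>y\<in>\<sigma>. x \<subseteq> y \<or> y \<subseteq> x"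
  shows "\<sigma> \<in> order_complex (P \<inter> \<sigma>)"
  using assms unfolding order_complex_def by blast

lemma order_complex_subposetD:
  assumes "\<sigma> \<in> order_complex (P \<inter> U)"
  shows "finite \<sigma>" "\<sigma> \<subseteq> P" "\<And>x y. x \<in> \<sigma> \<Longrightarrow> y \<in> \<sigma> \<Longrightarrow> x \<subseteq> y \<or> y \<subseteq> x"
  using assms unfolding order_complex_def by auto

lemma simplex_pts_subset_subposet_realization:
  "\<sigma> \<in> order_complex (P \<inter> U) \<Longrightarrow> simplex_pts \<sigma> \<subseteq> subposet_realization P U"
  unfolding subposet_realization_def realization_set_def by blast

lemma subposet_realizationE:
  assumes "x \<in> subposet_realization P U"
  obtains \<sigma> where "\<sigma> \<in> order_complex (P \<inter> U)" "x \<in> simplex_pts \<sigma>"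
  using assms unfolding subposet_realization_def realization_set_def by blast

lemma fpath_fun_linepath:
  assumes "\<sigma> \<in> order_complex (P \<inter> U)" "finite U" "a \<in> simplex_pts \<sigma>" "b \<in> simplex_pts \<sigma>"
  shows "fpath P (fun_linepath a b)"
proof (rule fpathI[OF path_fun_linepath _ assms(2)])
  show "path_image (fun_linepath a b) \<subseteq> subposet_realization P U"
    using fun_linepath_in_simplex_pts[OF assms(3,4)] simplex_pts_subset_subposet_realization[OF assms(1)]
    by (auto simp: path_image_def)
qed

lemma fhomotopic_fun_linepath_triangle:
  assumes "\<sigma> \<in> order_complex (P \<inter> U)" "finite U"
    "a \<in> simplex_pts \<sigma>" "b \<in> simplex_pts \<sigma>" "c \<in> simplex_pts \<sigma>"
  shows "fhomotopic P (fun_linepath a b +++ fun_linepath b c) (fun_linepath a c)"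
proof -
  have "fun_linepath (fun_linepath a c t) b s \<in> subposet_realization P U"
    if "t \<in> {0..1}" "s \<in> {0..1}" for t s
    using fun_linepath_in_simplex_pts[OF fun_linepath_in_simplex_pts[OF assms(3,5) that(1)]
        assms(4) that(2)]
      simplex_pts_subset_subposet_realization[OF assms(1)] by blast
  then have "homotopic_paths (subposet_realization P U) (fun_linepath a c)
               (fun_linepath a b +++ fun_linepath b c)"
    using homotopic_paths_through_point[of "fun_linepath a c" b] by simp
  then show ?thesis
    using assms(2) by (rule fhomotopic_sym[OF fhomotopicI])
qed

lemma fpath_edge_path:
  assumes "u \<in> P" "v \<in> P" "u \<subseteq> v \<or> v \<subseteq> u"
  shows "fpath P (edge_path u v)"
proof -
  have "{u, v} \<in> order_complex (P \<inter> {u, v})"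
    using assms by (intro chain_in_order_complex) auto
  then show ?thesis
    unfolding edge_path_def by (rule fpath_fun_linepath) (auto intro: vertex_point_in_simplex_pts)
qed

lemma fhomotopic_edge_path_triangle:
  assumes "u \<in> P" "v \<in> P" "w \<in> P" "u \<subseteq> v \<or> v \<subseteq> u" "v \<subseteq> w \<or> w \<subseteq> v" "u \<subseteq> w \<or> w \<subseteq> u"
  shows "fhomotopic P (edge_path u v +++ edge_path v w) (edge_path u w)"
proof -
  have "{u, v, w} \<in> order_complex (P \<inter> {u, v, w})"
    using assms by (intro chain_in_order_complex) auto
  then show ?thesis
    unfolding edge_path_def
    by (rule fhomotopic_fun_linepath_triangle) (auto intro: vertex_point_in_simplex_pts)
qed

lemma subposet_realization_nonzero_mem:
  assumes "x \<in> subposet_realization P U" "x w \<noteq> 0"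
  shows "w \<in> P"
proof -
  obtain \<sigma> where "\<sigma> \<in> order_complex (P \<inter> U)" "x \<in> simplex_pts \<sigma>"
    using assms(1) by (rule subposet_realizationE)
  then show ?thesis
    using simplex_pts_nonzero_mem[of x \<sigma> w] assms(2) order_complex_subposetD(2) by blast
qed

lemma subposet_realization_ex_pos:
  assumes "x \<in> subposet_realization P U"
  obtains w where "x w > 0"
proof -
  obtain \<sigma> where "x \<in> simplex_pts \<sigma>"
    using assms by (rule subposet_realizationE)
  then have sum: "sum x \<sigma> = 1" and nonneg: "\<And>w. 0 \<le> x w"
    unfolding simplex_pts_def by auto
  have "\<exists>w. x w \<noteq> 0"
  proof (rule ccontr)
    assume "\<not> (\<exists>w. x w \<noteq> 0)"
    then have "sum x \<sigma> = 0"
      by (simp add: sum.neutral)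
    then show False
      using sum by simp
  qed
  then obtain w where "x w \<noteq> 0" ..
  then show ?thesis
    using nonneg[of w] by (intro that[of w]) linarith
qed

lemma fpath_vertex_linepath:
  assumes "x \<in> subposet_realization P U" "finite U" "x w > 0"
  shows "fpath P (fun_linepath (vertex_point w) x)"
proof -
  obtain \<sigma> where \<sigma>: "\<sigma> \<in> order_complex (P \<inter> U)" "x \<in> simplex_pts \<sigma>"
    using assms(1) by (rule subposet_realizationE)
  then have "vertex_point w \<in> simplex_pts \<sigma>"
    using simplex_pts_nonzero_mem[OF \<sigma>(2), of w] assms(3) order_complex_subposetD(1)[OF \<sigma>(1)]
    by (intro vertex_point_in_simplex_pts) auto
  with \<sigma> assms(2) show ?thesis
    by (intro fpath_fun_linepath[of \<sigma> P U])
qed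

text \<open>The open star of a vertex is star-shaped about it.\<close>

lemma fun_linepath_vertex_in_subposet_realization:
  assumes "x \<in> subposet_realization P U" "x w > 0" "s \<in> {0..1}"
  shows "fun_linepath x (vertex_point w) s \<in> subposet_realization P U"
proof -
  obtain \<sigma> where \<sigma>: "\<sigma> \<in> order_complex (P \<inter> U)" "x \<in> simplex_pts \<sigma>"
    using assms(1) by (rule subposet_realizationE)
  then have "vertex_point w \<in> simplex_pts \<sigma>"
    using simplex_pts_nonzero_mem[OF \<sigma>(2), of w] assms(2) order_complex_subposetD(1)[OF \<sigma>(1)]
    by (intro vertex_point_in_simplex_pts) auto
  then have "fun_linepath x (vertex_point w) s \<in> simplex_pts \<sigma>"
    using \<sigma>(2) assms(3) by (intro fun_linepath_in_simplex_pts)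
  then show ?thesis
    using simplex_pts_subset_subposet_realization[OF \<sigma>(1)] by blast
qed

lemma realization_set_in_subposet_realization:
  assumes "f \<in> realization_set (order_complex P)" "{v. f v \<noteq> 0} \<subseteq> U"
  shows "f \<in> subposet_realization P U"
proof -
  obtain \<sigma> where \<sigma>: "\<sigma> \<in> order_complex P" "f \<in> simplex_pts \<sigma>"
    using assms(1) unfolding realization_set_def by blast
  define \<tau> where "\<tau> = {v. f v \<noteq> 0}"
  have "\<tau> \<subseteq> \<sigma>"
    using \<sigma>(2) unfolding simplex_pts_def \<tau>_def by auto
  have \<sigma>_chain: "finite \<sigma>" "\<sigma> \<subseteq> P" "\<forall>x\<in>\<sigma>. \<forall>y\<in>\<sigma>. x \<subseteq> y \<or> y \<subseteq> x"
    using \<sigma>(1) unfolding order_complex_def by auto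
  have "sum f \<tau> = sum f \<sigma>"
    using \<open>\<tau> \<subseteq> \<sigma>\<close> \<sigma>_chain(1) by (intro sum.mono_neutral_left) (auto simp: \<tau>_def)
  then have "sum f \<tau> = 1"
    using \<sigma>(2) unfolding simplex_pts_def by simp
  have "\<tau> \<in> order_complex (P \<inter> U)"
    unfolding order_complex_def
  proof (intro CollectI conjI)
    show "\<tau> \<noteq> {}"
      using \<open>sum f \<tau> = 1\<close> by auto
    show "finite \<tau>"
      using \<open>\<tau> \<subseteq> \<sigma>\<close> \<sigma>_chain(1) by (rule finite_subset)
    show "\<tau> \<subseteq> P \<inter> U"
      using \<open>\<tau> \<subseteq> \<sigma>\<close> \<sigma>_chain(2) assms(2) unfolding \<tau>_def by blast
    show "\<forall>x\<in>\<tau>. \<forall>y\<in>\<tau>. x \<subseteq> y \<or> y \<subseteq> x"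
      using \<open>\<tau> \<subseteq> \<sigma>\<close> \<sigma>_chain(3) by blast
  qed
  moreover have "f \<in> simplex_pts \<tau>"
    using \<sigma>(2) \<open>sum f \<tau> = 1\<close> unfolding simplex_pts_def \<tau>_def by auto
  ultimately show ?thesis
    by (rule simplex_pts_subset_subposet_realization[THEN subsetD])
qed

lemma pathin_geom_realization_finite_subposet:
  assumes "pathin (geom_realization (order_complex P)) p"
  obtains U where "finite U" "path p" "path_image p \<subseteq> subposet_realization P U"
proof -
  let ?X = "geom_realization (order_complex P)"
  have p: "continuous_map (top_of_set {0..1}) ?X p"
    using assms unfolding pathin_def .
  then have "continuous_map (top_of_set {0..1}) (top_of_set (realization_set (order_complex P))) p"
    using continuous_map_compose[OF p continuous_map_geom_realization_id] by simp
  then have "path p" and p_in: "p ` {0..1} \<subseteq> realization_set (order_complex P)"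
    by (auto simp: path_def)
  have "compactin ?X (p ` {0..1})"
    using image_compactin[OF _ p] by (simp add: compactin_subtopology)
  then have "finite (\<Union>f\<in>p ` {0..1}. {v. f v \<noteq> 0})"
    by (rule compactin_geom_realization_finite_support) (simp add: order_complex_def)
  moreover have "path_image p \<subseteq> subposet_realization P (\<Union>f\<in>p ` {0..1}. {v. f v \<noteq> 0})"
    unfolding path_image_def using p_in by (auto intro!: realization_set_in_subposet_realization)
  ultimately show ?thesis
    using that \<open>path p\<close> by blast
qed

lemma continuous_map_subposet_realization_inclusion:
  assumes "finite U"
  shows "continuous_map (top_of_set (subposet_realization P U)) (geom_realization (order_complex P)) id"
  unfolding subposet_realization_def
proof (rule continuous_map_finite_subcomplex_inclusion)
  have "order_complex (P \<inter> U) \<subseteq> Pow (P \<inter> U)"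
    unfolding order_complex_def by blast
  then show "finite (order_complex (P \<inter> U))"
    by (rule finite_subset) (simp add: assms)
  show "order_complex (P \<inter> U) \<subseteq> order_complex P"
    by (simp add: order_complex_mono)
qed

lemma unit_interval_subdivision:
  assumes "\<And>w. open (V w)" "{0..1} \<subseteq> (\<Union>w. V w)"
  obtains n where "0 < n"
    "\<And>k. k < n \<Longrightarrow> \<exists>w. {real k / real n .. real (Suc k) / real n} \<subseteq> V w"
proof -
  have opn: "\<And>G. G \<in> range V \<Longrightarrow> open G"
    using assms(1) by blast
  obtain e where e: "0 < e" "\<And>x. x \<in> {0..1} \<Longrightarrow> \<exists>G\<in>range V. ball x e \<subseteq> G"
    by (rule Heine_Borel_lemma[OF compact_Icc assms(2)]) (use opn that in auto)
  obtain n :: nat where n: "1 / e < real n"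
    using reals_Archimedean2 by blast
  have "0 < 1 / e"
    using e(1) by simp
  then have "0 < n"
    using n by linarith
  have "1 / real n < e"
    using n e(1) \<open>0 < n\<close> by (simp add: divide_less_eq mult.commute)
  have "\<exists>w. {real k / real n .. real (Suc k) / real n} \<subseteq> V w" if "k < n" for k
  proof -
    have "0 \<le> real k / real n" "real (Suc k) / real n \<le> 1"
      using that by auto
    moreover have "real k / real n \<le> real (Suc k) / real n"
      by (simp add: divide_right_mono)
    ultimately obtain w where w: "ball (real k / real n) e \<subseteq> V w"
      using e(2)[of "real k / real n"] by auto
    have "real (Suc k) / real n - real k / real n = 1 / real n"
      by (simp add: diff_divide_distrib[symmetric])
    then have "{real k / real n .. real (Suc k) / real n} \<subseteq> ball (real k / real n) e"
      using \<open>1 / real n < e\<close> by (auto simp: dist_real_def)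
    then show ?thesis
      using w by blast
  qed
  then show ?thesis
    using that \<open>0 < n\<close> by blast
qed

lemma path_subdivision_positive_coordinate:
  assumes "path p" "path_image p \<subseteq> subposet_realization P U"
  obtains n v where "0 < n"
    "\<And>k t. k < n \<Longrightarrow> t \<in> {real k / real n .. real (Suc k) / real n} \<Longrightarrow> p t (v k) > 0"
proof -
  have cont: "continuous_on {0..1} p"
    using assms(1) by (simp add: path_def)
  have "\<exists>V. open V \<and> V \<inter> {0..1} = p -` {f. f w > 0} \<inter> {0..1}" for w
  proof -
    have "open {f :: 'a set \<Rightarrow> real. f w > 0}"
      by (intro open_Collect_less continuous_intros) simp
    then show ?thesis
      using continuous_on_open_invariant[THEN iffD1, OF cont, rule_format] by blast
  qed
  then have "\<exists>V. \<forall>w. open (V w) \<and> V w \<inter> {0..1} = p -` {f. f w > 0} \<inter> {0..1}"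
    by (rule choice[OF allI])
  then obtain V where V: "\<And>w. open (V w)" "\<And>w. V w \<inter> {0..1} = p -` {f. f w > 0} \<inter> {0..1}"
    by blast
  have "{0..1} \<subseteq> (\<Union>w. V w)"
  proof
    fix t :: real assume t: "t \<in> {0..1}"
    then have "p t \<in> subposet_realization P U"
      using assms(2) by (auto simp: path_image_def)
    then obtain w where "p t w > 0"
      by (rule subposet_realization_ex_pos)
    then show "t \<in> (\<Union>w. V w)"
      using V(2)[of w] t by blast
  qed
  then obtain n where n: "0 < n"
    and pieces: "\<And>k. k < n \<Longrightarrow> \<exists>w. {real k / real n .. real (Suc k) / real n} \<subseteq> V w"
    using V(1) unit_interval_subdivision by metis
  have "\<exists>w. \<forall>t \<in> {real k / real n .. real (Suc k) / real n}. p t w > 0" if "k \<in> {..<n}" for k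
  proof -
    obtain w where w: "{real k / real n .. real (Suc k) / real n} \<subseteq> V w"
      using pieces \<open>k \<in> {..<n}\<close> by blast
    have "{real k / real n .. real (Suc k) / real n} \<subseteq> {0..1}"
      using \<open>k \<in> {..<n}\<close> by auto
    then show ?thesis
      using w V(2)[of w] by blast
  qed
  from bchoice[OF ballI[OF this]]
  obtain v where "\<forall>k\<in>{..<n}. \<forall>t \<in> {real k / real n .. real (Suc k) / real n}. p t (v k) > 0" ..
  then show ?thesis
    using that n by blast
qed

section \<open>Simple connectivity from coherent paths to the vertices\<close>

locale coherent_vertex_paths =
  fixes P :: "'v set set" and base :: "'v set \<Rightarrow> real"
    and c :: "'v set \<Rightarrow> real \<Rightarrow> 'v set \<Rightarrow> real"
  assumes fpath_c: "w \<in> P \<Longrightarrow> fpath P (c w)"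
    and pathstart_c [simp]: "w \<in> P \<Longrightarrow> pathstart (c w) = base"
    and pathfinish_c [simp]: "w \<in> P \<Longrightarrow> pathfinish (c w) = vertex_point w"
    and fhomotopic_c_edge: "u \<in> P \<Longrightarrow> v \<in> P \<Longrightarrow> u \<subseteq> v \<Longrightarrow> fhomotopic P (c u +++ edge_path u v) (c v)"
begin

lemma fhomotopic_c_edge_comparable:
  assumes "u \<in> P" "v \<in> P" "u \<subseteq> v \<or> v \<subseteq> u"
  shows "fhomotopic P (c u +++ edge_path u v) (c v)"
proof (cases "u \<subseteq> v")
  case True
  then show ?thesis
    using assms fhomotopic_c_edge by blast
next
  case False
  then have "v \<subseteq> u"
    using assms(3) by blast
  then have "fhomotopic P (c u +++ edge_path u v) ((c v +++ edge_path v u) +++ edge_path u v)"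
    using assms
    by (intro fhomotopic_join_right fhomotopic_sym[OF fhomotopic_c_edge] fpath_edge_path) auto
  also have "fhomotopic P \<dots> (c v)"
    using fhomotopic_cancel_right[OF fpath_c[OF assms(2)] fpath_edge_path[OF assms(2,1)]] assms \<open>v \<subseteq> u\<close>
    by simp
  finally show ?thesis .
qed

definition path_via :: "'v set \<Rightarrow> ('v set \<Rightarrow> real) \<Rightarrow> real \<Rightarrow> 'v set \<Rightarrow> real" where
  "path_via w x = c w +++ fun_linepath (vertex_point w) x"

lemma pathstart_path_via [simp]: "w \<in> P \<Longrightarrow> pathstart (path_via w x) = base"
  and pathfinish_path_via [simp]: "pathfinish (path_via w x) = x"
  by (simp_all add: path_via_def)

lemma fpath_path_via:
  assumes "x \<in> subposet_realization P U" "finite U" "x w > 0"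
  shows "fpath P (path_via w x)"
proof -
  have "w \<in> P"
    using assms(1,3) subposet_realization_nonzero_mem by force
  then show ?thesis
    unfolding path_via_def using assms
    by (intro fpath_join fpath_c fpath_vertex_linepath) auto
qed

lemma fhomotopic_path_via:
  assumes "x \<in> subposet_realization P U" "finite U" "x u > 0" "x w > 0"
  shows "fhomotopic P (path_via u x) (path_via w x)"
proof -
  obtain \<sigma> where \<sigma>: "\<sigma> \<in> order_complex (P \<inter> U)" "x \<in> simplex_pts \<sigma>"
    using assms(1) by (rule subposet_realizationE)
  have "u \<in> \<sigma>" "w \<in> \<sigma>"
    using simplex_pts_nonzero_mem[OF \<sigma>(2)] assms(3,4) by force+
  then have uw: "u \<in> P" "w \<in> P" "u \<subseteq> w \<or> w \<subseteq> u" "finite \<sigma>"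
    using order_complex_subposetD[OF \<sigma>(1)] by blast+
  have vertices: "vertex_point u \<in> simplex_pts \<sigma>" "vertex_point w \<in> simplex_pts \<sigma>"
    using \<open>u \<in> \<sigma>\<close> \<open>w \<in> \<sigma>\<close> uw(4) by (simp_all add: vertex_point_in_simplex_pts)
  have "fhomotopic P (path_via u x) (c u +++ (edge_path u w +++ fun_linepath (vertex_point w) x))"
    unfolding path_via_def edge_path_def
    using fhomotopic_join_left[OF fhomotopic_sym[OF
        fhomotopic_fun_linepath_triangle[OF \<sigma>(1) assms(2) vertices \<sigma>(2)]]
        fpath_c[OF uw(1)]] uw(1)
    by simp
  also have "fhomotopic P \<dots> ((c u +++ edge_path u w) +++ fun_linepath (vertex_point w) x)"
    using uw fpath_vertex_linepath[OF assms(1,2,4)]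
    by (intro fhomotopic_assoc fpath_c fpath_edge_path) auto
  also have "fhomotopic P \<dots> (path_via w x)"
    unfolding path_via_def using uw fpath_vertex_linepath[OF assms(1,2,4)]
    by (intro fhomotopic_join_right fhomotopic_c_edge_comparable) auto
  finally show ?thesis .
qed

lemma fhomotopic_path_via_join:
  assumes "path q" "path_image q \<subseteq> subposet_realization P U" "finite U"
    and pos: "\<And>t. t \<in> {0..1} \<Longrightarrow> q t w > 0"
  shows "fhomotopic P (path_via w (pathstart q) +++ q) (path_via w (pathfinish q))"
proof -
  let ?X = "subposet_realization P U" and ?w = "vertex_point w"
  have q: "q t \<in> ?X" if "t \<in> {0..1}" for t
    using assms(2) that by (auto simp: path_image_def)
  have ends: "pathstart q \<in> ?X" "pathfinish q \<in> ?X" "pathstart q w > 0" "pathfinish q w > 0"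
    using q pos by (auto simp: pathstart_def pathfinish_def)
  have "w \<in> P"
    using ends(1,3) subposet_realization_nonzero_mem by force
  have "fun_linepath (q t) ?w s \<in> ?X" if "t \<in> {0..1}" "s \<in> {0..1}" for t s
    using fun_linepath_vertex_in_subposet_realization[OF q[OF that(1)] pos[OF that(1)] that(2)] .
  then have "homotopic_paths ?X q (fun_linepath (pathstart q) ?w +++ fun_linepath ?w (pathfinish q))"
    using assms(1) by (rule homotopic_paths_through_point[rotated])
  then have "fhomotopic P (path_via w (pathstart q) +++ q)
      (path_via w (pathstart q) +++ (fun_linepath (pathstart q) ?w +++ fun_linepath ?w (pathfinish q)))"
    using assms(3) fpath_path_via[OF ends(1) assms(3) ends(3)]
    by (intro fhomotopic_join_left fhomotopicI) auto
  also have "fhomotopic P \<dots> (path_via w (pathfinish q))"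
    unfolding path_via_def
    using fhomotopic_cancel_middle[OF fpath_c[OF \<open>w \<in> P\<close>] fpath_vertex_linepath[OF ends(1) assms(3) ends(3)]
        fpath_vertex_linepath[OF ends(2) assms(3) ends(4)]] \<open>w \<in> P\<close>
    by simp
  finally show ?thesis .
qed

lemma fhomotopic_path_via_extend:
  assumes p: "path p" "path_image p \<subseteq> subposet_realization P U" "finite U"
    and u: "u \<in> {0..1}" "u' \<in> {0..1}" "u \<le> u'"
    and pos: "\<And>t. t \<in> {u..u'} \<Longrightarrow> p t w > 0"
    and r: "fpath P r" "pathfinish r = p 0"
    and hom: "fhomotopic P (r +++ (p \<circ> subpath 0 u id)) (path_via w (p u))"
  shows "fhomotopic P (r +++ (p \<circ> subpath 0 u' id)) (path_via w (p u'))"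
proof -
  let ?A = "p \<circ> subpath 0 u id" and ?Q = "p \<circ> subpath u u' id"
  have fpath_piece: "fpath P (p \<circ> subpath a b id)" if "a \<in> {0..1}" "b \<in> {0..1}" for a b
    using path_compose_subpath[OF p(1) that] p(2,3) by (intro fpathI) auto
  have "fhomotopic P (r +++ (p \<circ> subpath 0 u' id)) (r +++ (?A +++ ?Q))"
    using homotopic_paths_join_compose_subpaths[OF p(1,2), of 0 u u'] u p(3) r
    by (intro fhomotopic_join_left fhomotopic_sym[OF fhomotopicI])
      (auto simp: pathstart_compose pathfinish_compose)
  also have "fhomotopic P \<dots> ((r +++ ?A) +++ ?Q)"
    using r fpath_piece u by (intro fhomotopic_assoc) (auto simp: pathstart_compose pathfinish_compose)
  also have "fhomotopic P \<dots> (path_via w (p u) +++ ?Q)"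
    using hom fpath_piece[OF u(1,2)]
    by (rule fhomotopic_join_right) (simp add: pathstart_compose pathfinish_compose)
  also have "fhomotopic P \<dots> (path_via w (p u'))"
  proof -
    have "(u' - u) * s + u \<in> {u..u'}" if "s \<in> {0..1}" for s
      using u(3) that mult_left_le[of s "u' - u"] by auto
    then have "?Q s w > 0" if "s \<in> {0..1}" for s
      using pos that by (simp add: subpath_def)
    then show ?thesis
      using fhomotopic_path_via_join[of ?Q U w] path_compose_subpath[OF p(1) u(1,2)] p(2,3)
      by (auto simp: pathstart_compose pathfinish_compose)
  qed
  finally show ?thesis .
qed

lemma fhomotopic_path_via_prefix:
  assumes p: "path p" "path_image p \<subseteq> subposet_realization P U" "finite U"
    and n: "0 < n"
    and v: "\<And>k t. k < n \<Longrightarrow> t \<in> {real k / real n .. real (Suc k) / real n} \<Longrightarrow> p t (v k) > 0"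
    and "k \<le> n" "p (real k / real n) w > 0"
  shows "fhomotopic P (path_via (v 0) (p 0) +++ (p \<circ> subpath 0 (real k / real n) id))
           (path_via w (p (real k / real n)))"
  using assms(6,7)
proof (induction k arbitrary: w)
  case 0
  have p0: "p 0 \<in> subposet_realization P U" "p 0 (v 0) > 0"
    using p(2) v[of 0 0] n by (auto simp: path_image_def)
  have start: "p \<circ> subpath 0 (real 0 / real n) id = (\<lambda>_. p 0)" "p (real 0 / real n) = p 0"
    by (auto simp: subpath_def)
  have "fhomotopic P (path_via (v 0) (p 0) +++ (\<lambda>_. p 0)) (path_via (v 0) (p 0))"
    using fhomotopic_rid[OF fpath_path_via[OF p0(1) p(3) p0(2)]] by simp
  also have "fhomotopic P \<dots> (path_via w (p 0))"
    using 0 p0 p(3) by (intro fhomotopic_path_via) auto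
  finally show ?case
    unfolding start .
next
  case (Suc k)
  let ?t = "\<lambda>k. real k / real n"
  have t: "?t k \<in> {0..1}" "?t (Suc k) \<in> {0..1}" "?t k \<le> ?t (Suc k)"
    using Suc.prems(1) by (auto simp: divide_right_mono)
  have in_X: "p s \<in> subposet_realization P U" if "s \<in> {0..1}" for s
    using p(2) that by (auto simp: path_image_def)
  have "fpath P (path_via (v 0) (p 0))"
    using fpath_path_via[OF in_X[of 0] p(3)] v[of 0 0] n by simp
  moreover have "fhomotopic P (path_via (v 0) (p 0) +++ (p \<circ> subpath 0 (?t k) id))
      (path_via (v k) (p (?t k)))"
    using v[of k "?t k"] Suc.prems(1) t(3) by (intro Suc.IH) auto
  ultimately have "fhomotopic P (path_via (v 0) (p 0) +++ (p \<circ> subpath 0 (?t (Suc k)) id))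
      (path_via (v k) (p (?t (Suc k))))"
    using v[of k] Suc.prems(1) by (intro fhomotopic_path_via_extend[OF p t]) auto
  also have "fhomotopic P \<dots> (path_via w (p (?t (Suc k))))"
    using in_X t(2) p(3) v[of k "?t (Suc k)"] Suc.prems t(3) by (intro fhomotopic_path_via) auto
  finally show ?case .
qed

lemma fhomotopic_loop_const:
  assumes "path p" "path_image p \<subseteq> subposet_realization P U" "finite U" "pathfinish p = pathstart p"
  shows "fhomotopic P p (\<lambda>_. pathstart p)"
proof -
  obtain n v where n: "0 < n"
    and v: "\<And>k t. k < n \<Longrightarrow> t \<in> {real k / real n .. real (Suc k) / real n} \<Longrightarrow> p t (v k) > 0"
    using path_subdivision_positive_coordinate[OF assms(1,2)] by blast
  have p0: "p 0 \<in> subposet_realization P U" "p 0 (v 0) > 0"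
    using assms(2) v[of 0 0] n by (auto simp: path_image_def)
  have "p 1 = p 0"
    using assms(4) by (simp add: pathstart_def pathfinish_def)
  then have "fhomotopic P (path_via (v 0) (p 0) +++ (p \<circ> subpath 0 1 id)) (path_via (v 0) (p 0))"
    using fhomotopic_path_via_prefix[OF assms(1-3) n v, where k = n and w = "v 0"] n p0 by simp
  then show ?thesis
    using fpath_path_via[OF p0(1) assms(3) p0(2)] fpathI[OF assms(1-3)]
    by (intro fhomotopic_cancel_left[of P "path_via (v 0) (p 0)"]) (auto simp: pathstart_def)
qed

lemma loop_homotopic_base:
  assumes "pathin (geom_realization (order_complex P)) p" "p 1 = p 0"
  obtains U where "finite U" "homotopic_loops (subposet_realization P U) p (\<lambda>_. base)"
proof -
  obtain U where U: "finite U" "path p" "path_image p \<subseteq> subposet_realization P U"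
    using assms(1) by (rule pathin_geom_realization_finite_subposet)
  have "p 0 \<in> subposet_realization P U"
    using U(3) by (auto simp: path_image_def)
  then obtain w where w: "p 0 w > 0"
    by (rule subposet_realization_ex_pos)
  then have "w \<in> P"
    using \<open>p 0 \<in> _\<close> subposet_realization_nonzero_mem by force
  have "fhomotopic P p (\<lambda>_. p 0)"
    using fhomotopic_loop_const[OF U(2,3,1)] assms(2) by (simp add: pathstart_def pathfinish_def)
  moreover have "fhomotopic P (path_via w (p 0)) (path_via w (p 0))"
    using \<open>p 0 \<in> _\<close> U(1) w by (intro fhomotopic_refl fpath_path_via)
  ultimately obtain V where V: "finite V" "homotopic_paths (subposet_realization P V) p (\<lambda>_. p 0)"
    "homotopic_paths (subposet_realization P V) (path_via w (p 0)) (path_via w (p 0))"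
    by (rule fhomotopic_common_subposet)
  have loop: "homotopic_loops (subposet_realization P V) p (\<lambda>_. p 0)"
    using V(2) assms(2)
    by (intro homotopic_paths_imp_homotopic_loops) (auto simp: pathstart_def pathfinish_def)
  have const: "homotopic_loops (subposet_realization P V) (\<lambda>_. base) (\<lambda>_. p 0)"
    using homotopic_loops_const_path[of "path_via w (p 0)"] homotopic_paths_imp_path[OF V(3)]
      homotopic_paths_imp_subset[OF V(3)] \<open>w \<in> P\<close>
    by simp
  show ?thesis
    using that[OF V(1) homotopic_loops_trans[OF loop homotopic_loops_sym[OF const]]] .
qed

theorem simply_connected_space_geom_realization:
  "simply_connected_space (geom_realization (order_complex P))"
  unfolding simply_connected_space_def
proof (intro allI impI)
  fix p q
  assume loops: "pathin (geom_realization (order_complex P)) p \<and> p 1 = p 0 \<and>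
    pathin (geom_realization (order_complex P)) q \<and> q 1 = q 0"
  obtain U V where "finite U" "homotopic_loops (subposet_realization P U) p (\<lambda>_. base)"
    "finite V" "homotopic_loops (subposet_realization P V) q (\<lambda>_. base)"
    using loops loop_homotopic_base by metis
  moreover have "subposet_realization P U \<subseteq> subposet_realization P (U \<union> V)"
    "subposet_realization P V \<subseteq> subposet_realization P (U \<union> V)"
    by (simp_all add: subposet_realization_mono)
  ultimately have "homotopic_loops (subposet_realization P (U \<union> V)) p q"
    by (meson homotopic_loops_subset homotopic_loops_sym homotopic_loops_trans)
  then have "homotopic_with (\<lambda>r. r 1 = r 0) (top_of_set {0..1})
      (geom_realization (order_complex P)) (id \<circ> p) (id \<circ> q)"
    unfolding homotopic_loops_def
    using continuous_map_subposet_realization_inclusion[of "U \<union> V" P] \<open>finite U\<close> \<open>finite V\<close>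
    by (intro homotopic_with_compose_continuous_map_left) (auto simp: pathstart_def pathfinish_def)
  then show "homotopic_with (\<lambda>r. r 1 = r 0) (top_of_set {0..1}) (geom_realization (order_complex P)) p q"
    by simp
qed

end

section \<open>The coset poset of a non-cyclic group\<close>

lemma (in group) l_coset_generate_self: "z \<in> carrier G \<Longrightarrow> z \<in> z <# generate G S"
  unfolding l_coset_def by (rule UN_I[OF generate.one]) simp

lemma (in group) l_coset_generate_mem:
  assumes "z \<in> carrier G" "a \<in> carrier G" "inv z \<otimes> a \<in> S"
  shows "a \<in> z <# generate G S"
proof -
  have "z \<otimes> (inv z \<otimes> a) \<in> z <# generate G S"
    unfolding l_coset_def by (rule UN_I[OF generate.incl[OF assms(3)]]) simp
  then show ?thesis
    using assms(1,2) by (simp add: m_assoc[symmetric])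
qed

locale noncyclic_group = group +
  assumes not_cyclic: "\<not> (\<exists>g\<in>carrier G. generate G {g} = carrier G)"
begin

lemma generate_singleton_proper: "g \<in> carrier G \<Longrightarrow> generate G {g} \<noteq> carrier G"
  using not_cyclic by blast

lemma trivial_subgroup_proper: "{\<one>} \<noteq> carrier G"
proof
  assume trivial: "{\<one>} = carrier G"
  have "generate G {\<one>} \<subseteq> carrier G"
    by (rule generate_incl) simp
  moreover have "carrier G \<subseteq> generate G {\<one>}"
    unfolding trivial[symmetric] using generate.one by blast
  ultimately have "generate G {\<one>} = carrier G"
    by (rule subset_antisym)
  then show False
    using generate_singleton_proper by simp
qed

lemma l_coset_in_coset_poset:
  "x \<in> carrier G \<Longrightarrow> subgroup H G \<Longrightarrow> H \<noteq> carrier G \<Longrightarrow> x <# H \<in> coset_poset G"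
  unfolding coset_poset_def by blast

lemma coset_posetE:
  assumes "C \<in> coset_poset G"
  obtains a H where "a \<in> carrier G" "subgroup H G" "C = a <# H"
  using assms unfolding coset_poset_def by blast

lemma singleton_in_coset_poset: "x \<in> carrier G \<Longrightarrow> {x} \<in> coset_poset G"
  using l_coset_in_coset_poset[OF _ triv_subgroup trivial_subgroup_proper]
  by (simp add: l_coset_def)

lemma coset_poset_subset_carrier: "C \<in> coset_poset G \<Longrightarrow> C \<subseteq> carrier G"
  by (elim coset_posetE) (simp add: l_coset_subset_G subgroup.subset)

lemma coset_poset_nonempty: "C \<in> coset_poset G \<Longrightarrow> C \<noteq> {}"
proof (elim coset_posetE)
  fix a H assume "a \<in> carrier G" "subgroup H G" "C = a <# H"
  then have "a \<otimes> \<one> \<in> C"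
    unfolding l_coset_def using subgroup.one_closed by blast
  then show "C \<noteq> {}"
    by blast
qed

lemma singleton_in_coset_poset_of_mem: "C \<in> coset_poset G \<Longrightarrow> x \<in> C \<Longrightarrow> {x} \<in> coset_poset G"
  using singleton_in_coset_poset coset_poset_subset_carrier by blast

lemma common_coset:
  assumes "z \<in> carrier G" "a \<in> carrier G" "b \<in> carrier G"
    "generate G {inv z \<otimes> a, inv z \<otimes> b} \<noteq> carrier G"
  obtains F where "F \<in> coset_poset G" "z \<in> F" "a \<in> F" "b \<in> F"
proof
  let ?F = "z <# generate G {inv z \<otimes> a, inv z \<otimes> b}"
  show "?F \<in> coset_poset G"
    using assms by (intro l_coset_in_coset_poset generate_is_subgroup) auto
  show "z \<in> ?F" "a \<in> ?F" "b \<in> ?F"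
    using assms by (auto intro: l_coset_generate_self l_coset_generate_mem)
qed

lemma common_coset_one:
  assumes "a \<in> carrier G" "b \<in> carrier G" "generate G {a, b} \<noteq> carrier G"
  obtains F where "F \<in> coset_poset G" "\<one> \<in> F" "a \<in> F" "b \<in> F"
proof -
  have "generate G {inv \<one> \<otimes> a, inv \<one> \<otimes> b} \<noteq> carrier G"
    using assms by simp
  then show ?thesis
    by (rule common_coset[OF one_closed assms(1,2)]) (rule that)
qed

definition smallest_coset :: "'a \<Rightarrow> 'a \<Rightarrow> 'a set" where
  "smallest_coset x y = x <# generate G {inv x \<otimes> y}"

lemma smallest_coset:
  assumes "x \<in> carrier G" "y \<in> carrier G"
  shows "smallest_coset x y \<in> coset_poset G" "x \<in> smallest_coset x y" "y \<in> smallest_coset x y"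
proof -
  have "inv x \<otimes> y \<in> carrier G"
    using assms by simp
  then show "smallest_coset x y \<in> coset_poset G"
    unfolding smallest_coset_def using assms(1) generate_singleton_proper
    by (intro l_coset_in_coset_poset generate_is_subgroup) auto
  show "x \<in> smallest_coset x y" "y \<in> smallest_coset x y"
    unfolding smallest_coset_def using assms
    by (simp_all add: l_coset_generate_self l_coset_generate_mem)
qed

lemma smallest_coset_subset:
  assumes "C \<in> coset_poset G" "x \<in> C" "y \<in> C"
  shows "smallest_coset x y \<subseteq> C"
proof -
  obtain a H where aH: "a \<in> carrier G" "subgroup H G" "C = a <# H"
    using assms(1) by (rule coset_posetE)
  have x: "x \<in> carrier G"
    using assms(1,2) coset_poset_subset_carrier by blast
  have C: "C = x <# H"
    using l_repr_independence[OF _ aH(1,2)] assms(2) aH(3) by simp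
  then obtain h where h: "h \<in> H" "y = x \<otimes> h"
    using assms(3) unfolding l_coset_def by blast
  then have "inv x \<otimes> y = h"
    using x aH(2) subgroup.mem_carrier by (fastforce simp: m_assoc[symmetric])
  then have "generate G {inv x \<otimes> y} \<subseteq> H"
    using h(1) aH(2) by (intro generate_subgroup_incl) auto
  then show ?thesis
    unfolding smallest_coset_def C l_coset_def by blast
qed

end

definition coset_detour :: "'a set \<Rightarrow> 'a \<Rightarrow> 'a \<Rightarrow> real \<Rightarrow> 'a set \<Rightarrow> real" where
  "coset_detour C x y = edge_path {x} C +++ edge_path C {y}"

lemma pathstart_coset_detour [simp]: "pathstart (coset_detour C x y) = vertex_point {x}"
  and pathfinish_coset_detour [simp]: "pathfinish (coset_detour C x y) = vertex_point {y}"
  by (simp_all add: coset_detour_def)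

context noncyclic_group
begin

definition elem_path :: "'a \<Rightarrow> 'a \<Rightarrow> real \<Rightarrow> 'a set \<Rightarrow> real" where
  "elem_path x y = coset_detour (smallest_coset x y) x y"

lemma pathstart_elem_path [simp]: "pathstart (elem_path x y) = vertex_point {x}"
  and pathfinish_elem_path [simp]: "pathfinish (elem_path x y) = vertex_point {y}"
  by (simp_all add: elem_path_def)

lemma fpath_edge_path_singleton:
  assumes "C \<in> coset_poset G" "x \<in> C"
  shows "fpath (coset_poset G) (edge_path {x} C)" "fpath (coset_poset G) (edge_path C {x})"
  using assms singleton_in_coset_poset_of_mem by (auto intro: fpath_edge_path)

lemma fpath_coset_detour:
  "C \<in> coset_poset G \<Longrightarrow> x \<in> C \<Longrightarrow> y \<in> C \<Longrightarrow> fpath (coset_poset G) (coset_detour C x y)"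
  unfolding coset_detour_def by (intro fpath_join fpath_edge_path_singleton) auto

lemma fpath_elem_path: "x \<in> carrier G \<Longrightarrow> y \<in> carrier G \<Longrightarrow> fpath (coset_poset G) (elem_path x y)"
  unfolding elem_path_def using smallest_coset by (intro fpath_coset_detour)

lemma fhomotopic_coset_detour_mono:
  assumes "C \<in> coset_poset G" "D \<in> coset_poset G" "D \<subseteq> C" "x \<in> D" "y \<in> D"
  shows "fhomotopic (coset_poset G) (coset_detour C x y) (coset_detour D x y)"
proof -
  let ?P = "coset_poset G"
  have singletons: "{x} \<in> ?P" "{y} \<in> ?P"
    using assms(2,4,5) singleton_in_coset_poset_of_mem by blast+
  have "fhomotopic ?P (edge_path {x} C +++ edge_path C {y})
      ((edge_path {x} D +++ edge_path D C) +++ edge_path C {y})"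
    using assms singletons
    by (intro fhomotopic_join_right fhomotopic_sym[OF fhomotopic_edge_path_triangle] fpath_edge_path) auto
  also have "fhomotopic ?P \<dots> (edge_path {x} D +++ (edge_path D C +++ edge_path C {y}))"
    using assms singletons by (intro fhomotopic_sym[OF fhomotopic_assoc] fpath_edge_path) auto
  also have "fhomotopic ?P \<dots> (edge_path {x} D +++ edge_path D {y})"
    using assms singletons
    by (intro fhomotopic_join_left fhomotopic_edge_path_triangle fpath_edge_path) auto
  finally show ?thesis
    unfolding coset_detour_def .
qed

lemma fhomotopic_coset_detour_elem_path:
  assumes "C \<in> coset_poset G" "x \<in> C" "y \<in> C"
  shows "fhomotopic (coset_poset G) (coset_detour C x y) (elem_path x y)"
proof -
  have "x \<in> carrier G" "y \<in> carrier G"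
    using assms coset_poset_subset_carrier by blast+
  then show ?thesis
    unfolding elem_path_def
    using assms smallest_coset smallest_coset_subset by (intro fhomotopic_coset_detour_mono) auto
qed

lemma fhomotopic_elem_path_triangle_in_coset:
  assumes "F \<in> coset_poset G" "x \<in> F" "y \<in> F" "z \<in> F"
  shows "fhomotopic (coset_poset G) (elem_path x y +++ elem_path y z) (elem_path x z)"
proof -
  let ?P = "coset_poset G"
  have "fhomotopic ?P (elem_path x y +++ elem_path y z) (coset_detour F x y +++ coset_detour F y z)"
    using assms by (intro fhomotopic_join fhomotopic_sym[OF fhomotopic_coset_detour_elem_path]) auto
  also have "fhomotopic ?P \<dots> (coset_detour F x z)"
    unfolding coset_detour_def
    using fhomotopic_cancel_middle[of ?P "edge_path {x} F" "edge_path F {y}" "edge_path F {z}"]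
      fpath_edge_path_singleton assms
    by simp
  also have "fhomotopic ?P \<dots> (elem_path x z)"
    using assms(1,2,4) by (rule fhomotopic_coset_detour_elem_path)
  finally show ?thesis .
qed

end

locale coset_triangle_group = noncyclic_group +
  assumes generating_pair_triangle:
    "\<lbrakk>x \<in> carrier G; y \<in> carrier G; generate G {x, y} = carrier G\<rbrakk> \<Longrightarrow>
       \<exists>z\<in>carrier G. generate G {z, x} \<noteq> carrier G \<and> generate G {z, y} \<noteq> carrier G \<and>
         generate G {inv z \<otimes> x, inv z \<otimes> y} \<noteq> carrier G"
begin

lemma fhomotopic_elem_path_triangle:
  assumes "g \<in> carrier G" "h \<in> carrier G"
  shows "fhomotopic (coset_poset G) (elem_path \<one> g +++ elem_path g h) (elem_path \<one> h)"
proof (cases "generate G {g, h} = carrier G")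
  case False
  obtain F where "F \<in> coset_poset G" "\<one> \<in> F" "g \<in> F" "h \<in> F"
    by (rule common_coset_one[OF assms False])
  then show ?thesis
    by (rule fhomotopic_elem_path_triangle_in_coset)
next
  case True
  let ?P = "coset_poset G"
  obtain z where z: "z \<in> carrier G" "generate G {z, g} \<noteq> carrier G" "generate G {z, h} \<noteq> carrier G"
    "generate G {inv z \<otimes> g, inv z \<otimes> h} \<noteq> carrier G"
    using generating_pair_triangle[OF assms True] by blast
  obtain F1 where F1: "F1 \<in> ?P" "\<one> \<in> F1" "z \<in> F1" "g \<in> F1"
    using common_coset_one[OF z(1) assms(1) z(2)] .
  obtain F2 where F2: "F2 \<in> ?P" "z \<in> F2" "g \<in> F2" "h \<in> F2"
    using common_coset[OF z(1) assms z(4)] .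
  obtain F3 where F3: "F3 \<in> ?P" "\<one> \<in> F3" "z \<in> F3" "h \<in> F3"
    using common_coset_one[OF z(1) assms(2) z(3)] .
  have "fhomotopic ?P (elem_path \<one> g +++ elem_path g h)
      ((elem_path \<one> z +++ elem_path z g) +++ elem_path g h)"
    using fhomotopic_sym[OF fhomotopic_elem_path_triangle_in_coset[OF F1]] assms z(1)
    by (intro fhomotopic_join_right fpath_elem_path) auto
  also have "fhomotopic ?P \<dots> (elem_path \<one> z +++ (elem_path z g +++ elem_path g h))"
    using assms z(1) by (intro fhomotopic_sym[OF fhomotopic_assoc] fpath_elem_path) auto
  also have "fhomotopic ?P \<dots> (elem_path \<one> z +++ elem_path z h)"
    using fhomotopic_elem_path_triangle_in_coset[OF F2] z(1)
    by (intro fhomotopic_join_left fpath_elem_path) auto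
  also have "fhomotopic ?P \<dots> (elem_path \<one> h)"
    using F3 by (rule fhomotopic_elem_path_triangle_in_coset)
  finally show ?thesis .
qed

definition coset_vertex_path :: "'a set \<Rightarrow> real \<Rightarrow> 'a set \<Rightarrow> real" where
  "coset_vertex_path v = elem_path \<one> (SOME g. g \<in> v) +++ edge_path {SOME g. g \<in> v} v"

lemma some_mem_coset: "v \<in> coset_poset G \<Longrightarrow> (SOME g. g \<in> v) \<in> v"
  using coset_poset_nonempty by (simp add: some_in_eq)

lemma fpath_coset_vertex_path: "v \<in> coset_poset G \<Longrightarrow> fpath (coset_poset G) (coset_vertex_path v)"
  unfolding coset_vertex_path_def using some_mem_coset coset_poset_subset_carrier
  by (intro fpath_join fpath_elem_path fpath_edge_path_singleton) auto

lemma fhomotopic_coset_vertex_path_edge: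
  assumes "u \<in> coset_poset G" "v \<in> coset_poset G" "u \<subseteq> v"
  shows "fhomotopic (coset_poset G) (coset_vertex_path u +++ edge_path u v) (coset_vertex_path v)"
proof -
  let ?P = "coset_poset G"
  define g h where "g = (SOME g. g \<in> u)" and "h = (SOME h. h \<in> v)"
  have g: "g \<in> u" "g \<in> v" "g \<in> carrier G" and h: "h \<in> v" "h \<in> carrier G"
    using some_mem_coset assms coset_poset_subset_carrier unfolding g_def h_def by blast+
  have singletons: "{g} \<in> ?P" "{h} \<in> ?P"
    using g h singleton_in_coset_poset by blast+
  have "fhomotopic ?P ((elem_path \<one> g +++ edge_path {g} u) +++ edge_path u v)
      (elem_path \<one> g +++ (edge_path {g} u +++ edge_path u v))"
    using assms g singletons
    by (intro fhomotopic_sym[OF fhomotopic_assoc] fpath_elem_path fpath_edge_path) auto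
  also have "fhomotopic ?P \<dots> (elem_path \<one> g +++ edge_path {g} v)"
    using assms g singletons
    by (intro fhomotopic_join_left fhomotopic_edge_path_triangle fpath_elem_path) auto
  also have "fhomotopic ?P \<dots>
      (elem_path \<one> g +++ ((edge_path {g} v +++ edge_path v {h}) +++ edge_path {h} v))"
  proof -
    have "fhomotopic ?P ((edge_path {g} v +++ edge_path v {h}) +++ edge_path {h} v) (edge_path {g} v)"
      using fhomotopic_cancel_right[OF fpath_edge_path_singleton(1)[OF assms(2) g(2)]
          fpath_edge_path_singleton(2)[OF assms(2) h(1)]] by simp
    then have "fhomotopic ?P (edge_path {g} v)
        ((edge_path {g} v +++ edge_path v {h}) +++ edge_path {h} v)"
      by (rule fhomotopic_sym)
    then show ?thesis
      using fpath_elem_path[OF one_closed g(3)] by (rule fhomotopic_join_left) simp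
  qed
  also have "fhomotopic ?P \<dots> ((elem_path \<one> g +++ coset_detour v g h) +++ edge_path {h} v)"
    unfolding coset_detour_def using assms g h singletons
    by (intro fhomotopic_assoc fpath_join fpath_elem_path fpath_edge_path) auto
  also have "fhomotopic ?P \<dots> ((elem_path \<one> g +++ elem_path g h) +++ edge_path {h} v)"
    using assms g h singletons fhomotopic_coset_detour_elem_path[OF assms(2) g(2) h(1)]
    by (intro fhomotopic_join_right fhomotopic_join_left fpath_elem_path fpath_edge_path) auto
  also have "fhomotopic ?P \<dots> (elem_path \<one> h +++ edge_path {h} v)"
    using assms h singletons fhomotopic_elem_path_triangle[OF g(3) h(2)]
    by (intro fhomotopic_join_right fpath_edge_path) auto
  finally show ?thesis
    unfolding coset_vertex_path_def g_def h_def .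
qed

sublocale coherent_vertex_paths "coset_poset G" "vertex_point {\<one>}" coset_vertex_path
proof
  fix w assume "w \<in> coset_poset G"
  then show "fpath (coset_poset G) (coset_vertex_path w)"
    by (rule fpath_coset_vertex_path)
  show "pathstart (coset_vertex_path w) = vertex_point {\<one>}"
    "pathfinish (coset_vertex_path w) = vertex_point w"
    by (simp_all add: coset_vertex_path_def)
qed (rule fhomotopic_coset_vertex_path_edge)

end

theorem mainTheorem4:
  fixes G (structure)
  assumes "group G"
    and "\<not> (\<exists>g\<in>carrier G. generate G {g} = carrier G)"
    and "\<forall>x\<in>carrier G. \<forall>y\<in>carrier G. generate G {x, y} = carrier G \<longrightarrow>
           (\<exists>z\<in>carrier G. generate G {z, x} \<noteq> carrier G \<and> generate G {z, y} \<noteq> carrier G \<and>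
              generate G {inv z \<otimes> x, inv z \<otimes> y} \<noteq> carrier G)"
  shows "simply_connected_space (geom_realization (order_complex (coset_poset G)))"
proof -
  interpret coset_triangle_group G
    using assms unfolding coset_triangle_group_def coset_triangle_group_axioms_def
      noncyclic_group_def noncyclic_group_axioms_def by blast
  show ?thesis
    by (rule simply_connected_space_geom_realization)
qed

end
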